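(* Let $\mathfrak{A}$ be an atomic weakly associative relation algebra, let $\mathfrak{B}=\langle B,T_\kappa,E_{\kappa\lambda}\rangle_{\kappa,\lambda<3}$ be its suitable structure, and let $t=\langle t_0,t_1,t_2\rangle\in B$. Then (i) $E_{10}\cap T^*_0\{t\}=\{\langle t_0,t_0,t_0^{\mathsf d}\rangle\}$, (ii) $E_{01}\cap T^*_1\{t\}=\{\langle t_1,t_1,t_1^{\mathsf d}\rangle\}$, (iii) $E_{12}\cap T^*_2\{t\}=\{\langle t_2^{\mathsf r},t_2,t_2\rangle\}$, (iv) $E_{21}\cap T^*_1\{t\}=\{\langle t_1^{\mathsf r},t_1,t_1\rangle\}$, (v) $E_{02}\cap T^*_2\{t\}=\{\langle \breve{t_2},t_2^{\mathsf d},t_2\rangle\}$, (vi) $E_{20}\cap T^*_0\{t\}=\{\langle t_0,t_0^{\mathsf r},\breve{t_0}\rangle\}$.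
   Context: WA: algebras $\langle A,+,\overline{\phantom{x}},;,\breve{\phantom{x}},1'\rangle$ with $x\cdot y=\overline{\overline{x}+\overline{y}}$, $0'=\overline{1'}$, $1=1'+0'$, $0=\overline{1}$, satisfying for all $x,y,z$: $x+y=y+x$; $x+(y+z)=(x+y)+z$; $\overline{\overline{x}+\overline{y}}+\overline{\overline{x}+y}=x$; $((x\cdot 1');1);1=(x\cdot1');1$; $(x+y);z=x;z+y;z$; $x;1'=x$; $\breve{\breve{x}}=x$; $\breve{(x+y)}=\breve{x}+\breve{y}$; $\breve{(x;y)}=\breve{y};\breve{x}$; $\breve{x};\overline{x;y}+\overline{y}=\overline{y}$. Domain and range: $x^{\mathsf d}=(x;\breve{x})\cdot1'$, $x^{\mathsf r}=(\breve{x};x)\cdot1'$. Suitable structure: $B=\{s\in{}^3\mathrm{At}(\mathfrak{A}): s_2;s_0\ge s_1\}$; $T_\kappa=\{\langle s,t\rangle\in B\times B:s_\kappa=t_\kappa\}$; $E_{\kappa\kappa}=B$; for distinct $\kappa,\lambda$ with third index $\mu$, $E_{\kappa\lambda}=\{s\in B:s_\mu\le1'\}$. $T^*_\kappa(X)=\{y\in B:\exists x\in X\ \langle y,x\rangle\in T_\kappa\}$. *)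

theory Defs
  imports Main
begin

text \<open>An algebra of relation-algebra type, with carrier the whole type 'a:
  Boolean join +, complement, relative composition ;, converse, identity 1'.\<close>
record 'a ra =
  radd :: "'a \<Rightarrow> 'a \<Rightarrow> 'a"
  rcompl :: "'a \<Rightarrow> 'a"
  rcomp :: "'a \<Rightarrow> 'a \<Rightarrow> 'a"
  rconv :: "'a \<Rightarrow> 'a"
  rid :: 'a

definition rmeet :: "'a ra \<Rightarrow> 'a \<Rightarrow> 'a \<Rightarrow> 'a" where
  "rmeet A x y = rcompl A (radd A (rcompl A x) (rcompl A y))"

definition rdiv :: "'a ra \<Rightarrow> 'a" where
  "rdiv A = rcompl A (rid A)"

definition rtop :: "'a ra \<Rightarrow> 'a" where
  "rtop A = radd A (rid A) (rdiv A)"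

definition rbot :: "'a ra \<Rightarrow> 'a" where
  "rbot A = rcompl A (rtop A)"

definition rle :: "'a ra \<Rightarrow> 'a \<Rightarrow> 'a \<Rightarrow> bool" where
  "rle A x y \<longleftrightarrow> radd A x y = y"

definition WA :: "'a ra \<Rightarrow> bool" where
  "WA A \<longleftrightarrow>
     (\<forall>x y. radd A x y = radd A y x) \<and>
     (\<forall>x y z. radd A x (radd A y z) = radd A (radd A x y) z) \<and>
     (\<forall>x y. radd A (rcompl A (radd A (rcompl A x) (rcompl A y)))
                    (rcompl A (radd A (rcompl A x) y)) = x) \<and>
     (\<forall>x. rcomp A (rcomp A (rmeet A x (rid A)) (rtop A)) (rtop A)
            = rcomp A (rmeet A x (rid A)) (rtop A)) \<and>
     (\<forall>x y z. rcomp A (radd A x y) z = radd A (rcomp A x z) (rcomp A y z)) \<and>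
     (\<forall>x. rcomp A x (rid A) = x) \<and>
     (\<forall>x. rconv A (rconv A x) = x) \<and>
     (\<forall>x y. rconv A (radd A x y) = radd A (rconv A x) (rconv A y)) \<and>
     (\<forall>x y. rconv A (rcomp A x y) = rcomp A (rconv A y) (rconv A x)) \<and>
     (\<forall>x y. radd A (rcomp A (rconv A x) (rcompl A (rcomp A x y))) (rcompl A y)
              = rcompl A y)"

definition ra_atom :: "'a ra \<Rightarrow> 'a \<Rightarrow> bool" where
  "ra_atom A a \<longleftrightarrow> a \<noteq> rbot A \<and> (\<forall>y. rle A y a \<longrightarrow> y = rbot A \<or> y = a)"

definition At :: "'a ra \<Rightarrow> 'a set" where
  "At A = {a. ra_atom A a}"

definition ra_atomic :: "'a ra \<Rightarrow> bool" where
  "ra_atomic A \<longleftrightarrow> (\<forall>x. x \<noteq> rbot A \<longrightarrow> (\<exists>a\<in>At A. rle A a x))"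

definition rdom :: "'a ra \<Rightarrow> 'a \<Rightarrow> 'a" where
  "rdom A x = rmeet A (rcomp A x (rconv A x)) (rid A)"

definition rran :: "'a ra \<Rightarrow> 'a \<Rightarrow> 'a" where
  "rran A x = rmeet A (rcomp A (rconv A x) x) (rid A)"

definition sel :: "nat \<Rightarrow> 'a \<times> 'a \<times> 'a \<Rightarrow> 'a" where
  "sel k s = (if k = 0 then fst s else if k = 1 then fst (snd s) else snd (snd s))"

definition suitB :: "'a ra \<Rightarrow> ('a \<times> 'a \<times> 'a) set" where
  "suitB A = {(s0, s1, s2). s0 \<in> At A \<and> s1 \<in> At A \<and> s2 \<in> At A \<and>
                            rle A s1 (rcomp A s2 s0)}"

definition suitT :: "'a ra \<Rightarrow> nat \<Rightarrow> (('a \<times> 'a \<times> 'a) \<times> ('a \<times> 'a \<times> 'a)) set" where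
  "suitT A k = {(s, t). s \<in> suitB A \<and> t \<in> suitB A \<and> sel k s = sel k t}"

definition suitE :: "'a ra \<Rightarrow> nat \<Rightarrow> nat \<Rightarrow> ('a \<times> 'a \<times> 'a) set" where
  "suitE A k l = (if k = l then suitB A
                  else {s \<in> suitB A. rle A (sel (3 - k - l) s) (rid A)})"

definition Tstar :: "'a ra \<Rightarrow> nat \<Rightarrow> ('a \<times> 'a \<times> 'a) set \<Rightarrow> ('a \<times> 'a \<times> 'a) set" where
  "Tstar A k X = {y \<in> suitB A. \<exists>x\<in>X. (y, x) \<in> suitT A k}"

end

theory Submission
  imports Defs
begin

(* Huntington's axiom makes the Boolean reduct of a WA a Boolean algebra, and Schroeder's axiom
   yields the cycle laws: (x;y).z = 0 iff (conv x;z).y = 0 iff (z;conv y).x = 0.  The domain of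
   an atom a is again an atom: two disjoint nonzero subidentities below it would span disjoint
   cylinders e;1 and f;1 (this is where weak associativity enters), yet a lies below both.
   Consequently, for atoms x, a and a subidentity atom e, x <= e;a holds iff x = a and e is the
   domain of a, and e <= a;x holds iff x = conv a and e is the domain of a; the mirror images hold
   with ranges.  Each of the six sets consists of the triples of B with one coordinate prescribed
   and another below 1', and these equivalences compute them. *)

locale huntington =
  fixes join :: "'a \<Rightarrow> 'a \<Rightarrow> 'a" (infixl "\<oplus>" 65)
    and compl :: "'a \<Rightarrow> 'a" ("\<^bold>- _" [80] 80)
  assumes join_commute: "x \<oplus> y = y \<oplus> x"
    and join_assoc: "x \<oplus> (y \<oplus> z) = (x \<oplus> y) \<oplus> z"
    and huntington: "\<^bold>- (\<^bold>- x \<oplus> \<^bold>- y) \<oplus> \<^bold>- (\<^bold>- x \<oplus> y) = x"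
begin

lemma join_left_commute: "x \<oplus> (y \<oplus> z) = y \<oplus> (x \<oplus> z)"
  by (metis join_assoc join_commute)

lemma join_compl_compl: "x \<oplus> \<^bold>- x = \<^bold>- x \<oplus> \<^bold>- \<^bold>- x"
  by (smt (verit, ccfv_threshold) huntington join_commute join_left_commute)

lemma double_compl [simp]: "\<^bold>- \<^bold>- x = x"
  by (metis join_compl_compl huntington join_commute)

lemma join_compl_eq: "x \<oplus> \<^bold>- x = y \<oplus> \<^bold>- y"
  by (smt (verit, best) huntington join_commute join_left_commute double_compl)

lemma join_idem [simp]: "x \<oplus> x = x"
  by (smt (verit) huntington join_commute join_compl_eq join_left_commute double_compl)

lemma join_top: "x \<oplus> (e \<oplus> \<^bold>- e) = e \<oplus> \<^bold>- e"
  by (metis join_assoc join_compl_eq join_idem)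

lemma join_bot: "x \<oplus> \<^bold>- (e \<oplus> \<^bold>- e) = x"
  using huntington[of x x] by (metis join_commute join_compl_eq join_idem double_compl)

definition meet :: "'a \<Rightarrow> 'a \<Rightarrow> 'a" (infixl "\<otimes>" 70) where
  "x \<otimes> y = \<^bold>- (\<^bold>- x \<oplus> \<^bold>- y)"

definition le :: "'a \<Rightarrow> 'a \<Rightarrow> bool" (infix "\<preceq>" 50) where
  "x \<preceq> y \<longleftrightarrow> x \<oplus> y = y"

lemma compl_join: "\<^bold>- (x \<oplus> y) = \<^bold>- x \<otimes> \<^bold>- y"
  by (simp add: meet_def)

lemma compl_meet: "\<^bold>- (x \<otimes> y) = \<^bold>- x \<oplus> \<^bold>- y"
  by (simp add: meet_def)

lemma meet_split: "x \<otimes> y \<oplus> x \<otimes> \<^bold>- y = x"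
  using huntington[of x y] by (simp add: meet_def)

lemma join_meet_absorb: "x \<oplus> x \<otimes> y = x"
  by (metis meet_split join_assoc join_commute join_idem)

lemma meet_join_absorb: "x \<otimes> (x \<oplus> y) = x"
  by (metis compl_meet compl_join join_meet_absorb double_compl)

lemma meet_commute: "x \<otimes> y = y \<otimes> x"
  by (simp add: meet_def join_commute)

lemma meet_assoc: "x \<otimes> (y \<otimes> z) = (x \<otimes> y) \<otimes> z"
  by (simp add: meet_def join_assoc)

lemma le_iff_meet: "x \<preceq> y \<longleftrightarrow> x \<otimes> y = x"
  unfolding le_def by (metis meet_join_absorb join_meet_absorb join_commute meet_commute)

lemma lattice: "class.lattice (\<otimes>) (\<preceq>) (\<lambda>x y. x \<preceq> y \<and> x \<noteq> y) (\<oplus>)"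
proof unfold_locales
  show "x \<preceq> x" for x
    by (simp add: le_def)
  show "x \<preceq> y \<Longrightarrow> y \<preceq> z \<Longrightarrow> x \<preceq> z" "x \<preceq> z \<Longrightarrow> y \<preceq> z \<Longrightarrow> x \<oplus> y \<preceq> z" for x y z
    unfolding le_def by (metis join_assoc)+
  show antisym: "x \<preceq> y \<Longrightarrow> y \<preceq> x \<Longrightarrow> x = y" for x y
    unfolding le_def by (metis join_commute)
  then show "(x \<preceq> y \<and> x \<noteq> y) = (x \<preceq> y \<and> \<not> y \<preceq> x)" for x y
    by blast
  show "x \<preceq> x \<oplus> y" "y \<preceq> x \<oplus> y" for x y
    unfolding le_def by (metis join_assoc join_commute join_idem)+
  show "x \<otimes> y \<preceq> x" "x \<otimes> y \<preceq> y" for x y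
    unfolding le_iff_meet by (metis meet_assoc meet_commute meet_join_absorb join_idem)+
  show "x \<preceq> y \<Longrightarrow> x \<preceq> z \<Longrightarrow> x \<preceq> y \<otimes> z" for x y z
    unfolding le_iff_meet by (metis meet_assoc)
qed

sublocale L: lattice "(\<otimes>)" "(\<preceq>)" "\<lambda>x y. x \<preceq> y \<and> x \<noteq> y" "(\<oplus>)"
  by (fact lattice)

lemma meet_compl: "x \<otimes> \<^bold>- x = \<^bold>- (e \<oplus> \<^bold>- e)"
  using join_compl_eq[of "\<^bold>- x" e] by (simp add: meet_def)

lemma bot_le: "\<^bold>- (e \<oplus> \<^bold>- e) \<preceq> x"
  unfolding le_def by (metis join_bot join_commute)

lemma le_iff_meet_compl: "x \<preceq> y \<longleftrightarrow> x \<otimes> \<^bold>- y = \<^bold>- (e \<oplus> \<^bold>- e)"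
proof
  assume "x \<preceq> y"
  then have "x \<otimes> \<^bold>- y \<preceq> \<^bold>- (e \<oplus> \<^bold>- e)"
    using L.inf_mono[OF _ L.order.refl] meet_compl[of y e] by metis
  then show "x \<otimes> \<^bold>- y = \<^bold>- (e \<oplus> \<^bold>- e)"
    using bot_le by (rule L.order.antisym)
next
  assume "x \<otimes> \<^bold>- y = \<^bold>- (e \<oplus> \<^bold>- e)"
  then have "x = x \<otimes> y"
    using meet_split[of x y] by (simp add: join_bot)
  then show "x \<preceq> y"
    by (metis L.inf_le2)
qed

lemma le_compl_iff_meet: "x \<preceq> \<^bold>- y \<longleftrightarrow> x \<otimes> y = \<^bold>- (e \<oplus> \<^bold>- e)"
  using le_iff_meet_compl[of x "\<^bold>- y"] by simp

lemma meet_join_distrib: "x \<otimes> (y \<oplus> z) = x \<otimes> y \<oplus> x \<otimes> z"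
proof (rule L.order.antisym[OF _ L.distrib_inf_le])
  let ?w = "x \<otimes> y \<oplus> x \<otimes> z" and ?bot = "\<^bold>- (x \<oplus> \<^bold>- x)"
  have "x \<otimes> y \<otimes> \<^bold>- ?w = ?bot" "x \<otimes> z \<otimes> \<^bold>- ?w = ?bot"
    by (simp_all flip: le_iff_meet_compl)
  then have "x \<otimes> \<^bold>- ?w \<preceq> \<^bold>- y" "x \<otimes> \<^bold>- ?w \<preceq> \<^bold>- z"
    by (simp_all add: le_compl_iff_meet[where e = x] L.inf_assoc L.inf_commute L.inf_left_commute)
  then have "x \<otimes> \<^bold>- ?w \<preceq> \<^bold>- (y \<oplus> z)"
    by (simp add: compl_join)
  then have "x \<otimes> (y \<oplus> z) \<otimes> \<^bold>- ?w = ?bot"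
    by (simp add: le_compl_iff_meet[where e = x] L.inf_assoc L.inf_commute L.inf_left_commute)
  then show "x \<otimes> (y \<oplus> z) \<preceq> ?w"
    by (simp add: le_iff_meet_compl[where e = x])
qed

(* The top x \<oplus> \<^bold>- x does not depend on x (join_compl_eq); e is any witness naming it. *)
theorem boolean_algebra:
  "class.boolean_algebra (\<lambda>x y. x \<otimes> \<^bold>- y) compl (\<otimes>) (\<preceq>) (\<lambda>x y. x \<preceq> y \<and> x \<noteq> y) (\<oplus>)
     (\<^bold>- (e \<oplus> \<^bold>- e)) (e \<oplus> \<^bold>- e)"
proof unfold_locales
  show "x \<oplus> y \<otimes> z = (x \<oplus> y) \<otimes> (x \<oplus> z)" for x y z
    by (rule L.distrib_imp1[OF meet_join_distrib])
  show "x \<preceq> e \<oplus> \<^bold>- e" for x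
    by (simp add: le_def join_top)
  show "x \<oplus> \<^bold>- x = e \<oplus> \<^bold>- e" for x
    by (rule join_compl_eq)
qed (simp_all add: bot_le meet_compl)

end

locale wa_algebra =
  fixes A :: "'a ra"
  assumes WA: "WA A"
begin

abbreviation join (infixl "\<oplus>" 65) where "x \<oplus> y \<equiv> radd A x y"
abbreviation meet (infixl "\<cdot>" 70) where "x \<cdot> y \<equiv> rmeet A x y"
abbreviation comp (infixl "\<Zsemi>" 75) where "x \<Zsemi> y \<equiv> rcomp A x y"
abbreviation conv ("_\<^sup>\<smile>" [1000] 1000) where "x\<^sup>\<smile> \<equiv> rconv A x"
abbreviation le (infix "\<preceq>" 50) where "x \<preceq> y \<equiv> rle A x y"

lemma
  shows join_commute: "x \<oplus> y = y \<oplus> x"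
    and join_assoc: "x \<oplus> (y \<oplus> z) = (x \<oplus> y) \<oplus> z"
    and huntington: "rcompl A (rcompl A x \<oplus> rcompl A y) \<oplus> rcompl A (rcompl A x \<oplus> y) = x"
    and weak_assoc: "((x \<cdot> rid A) \<Zsemi> rtop A) \<Zsemi> rtop A = (x \<cdot> rid A) \<Zsemi> rtop A"
    and comp_join_distrib_right: "(x \<oplus> y) \<Zsemi> z = x \<Zsemi> z \<oplus> y \<Zsemi> z"
    and comp_id_right [simp]: "x \<Zsemi> rid A = x"
    and conv_conv [simp]: "x\<^sup>\<smile>\<^sup>\<smile> = x"
    and conv_join: "(x \<oplus> y)\<^sup>\<smile> = x\<^sup>\<smile> \<oplus> y\<^sup>\<smile>"
    and conv_comp: "(x \<Zsemi> y)\<^sup>\<smile> = y\<^sup>\<smile> \<Zsemi> x\<^sup>\<smile>"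
    and schroeder: "x\<^sup>\<smile> \<Zsemi> rcompl A (x \<Zsemi> y) \<preceq> rcompl A y"
  using WA unfolding WA_def rle_def by blast+

sublocale BA: boolean_algebra "\<lambda>x y. x \<cdot> rcompl A y" "rcompl A" "(\<cdot>)" "(\<preceq>)"
  "\<lambda>x y. x \<preceq> y \<and> x \<noteq> y" "(\<oplus>)" "rbot A" "rtop A"
proof -
  interpret H: huntington "(\<oplus>)" "rcompl A"
    by unfold_locales (fact join_commute join_assoc huntington)+
  have "rmeet A = H.meet" "rle A = H.le"
    by (simp_all add: fun_eq_iff rmeet_def H.meet_def rle_def H.le_def)
  then show "class.boolean_algebra (\<lambda>x y. x \<cdot> rcompl A y) (rcompl A) (\<cdot>) (\<preceq>)
      (\<lambda>x y. x \<preceq> y \<and> x \<noteq> y) (\<oplus>) (rbot A) (rtop A)"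
    using H.boolean_algebra[of "rid A"] by (simp add: rbot_def rtop_def rdiv_def)
qed

lemma conv_mono: "x \<preceq> y \<Longrightarrow> x\<^sup>\<smile> \<preceq> y\<^sup>\<smile>"
  unfolding rle_def by (metis conv_join)

lemma conv_le_conv_iff [simp]: "x\<^sup>\<smile> \<preceq> y\<^sup>\<smile> \<longleftrightarrow> x \<preceq> y"
  by (metis conv_conv conv_mono)

lemma conv_id [simp]: "(rid A)\<^sup>\<smile> = rid A"
  using conv_comp[of "(rid A)\<^sup>\<smile>" "rid A"] by simp

lemma comp_id_left [simp]: "rid A \<Zsemi> x = x"
  by (metis conv_comp conv_conv conv_id comp_id_right)

lemma comp_join_distrib_left: "x \<Zsemi> (y \<oplus> z) = x \<Zsemi> y \<oplus> x \<Zsemi> z"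
  by (metis conv_comp conv_conv conv_join comp_join_distrib_right)

lemma comp_mono_left: "x \<preceq> y \<Longrightarrow> x \<Zsemi> z \<preceq> y \<Zsemi> z"
  unfolding rle_def by (metis comp_join_distrib_right)

lemma comp_mono_right: "x \<preceq> y \<Longrightarrow> z \<Zsemi> x \<preceq> z \<Zsemi> y"
  unfolding rle_def by (metis comp_join_distrib_left)

lemma conv_meet: "(x \<cdot> y)\<^sup>\<smile> = x\<^sup>\<smile> \<cdot> y\<^sup>\<smile>"
proof (rule BA.order.antisym)
  show "(x \<cdot> y)\<^sup>\<smile> \<preceq> x\<^sup>\<smile> \<cdot> y\<^sup>\<smile>"
    by (simp add: conv_mono)
  have "(x\<^sup>\<smile> \<cdot> y\<^sup>\<smile>)\<^sup>\<smile> \<preceq> x \<cdot> y"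
    by (metis BA.inf_le1 BA.inf_le2 BA.le_inf_iff conv_conv conv_mono)
  then show "x\<^sup>\<smile> \<cdot> y\<^sup>\<smile> \<preceq> (x \<cdot> y)\<^sup>\<smile>"
    by (metis conv_conv conv_mono)
qed

lemma conv_bot [simp]: "(rbot A)\<^sup>\<smile> = rbot A"
  by (metis BA.bot_least BA.bot_unique conv_conv conv_mono)

lemma conv_eq_bot_iff [simp]: "x\<^sup>\<smile> = rbot A \<longleftrightarrow> x = rbot A"
  by (metis conv_bot conv_conv)

lemma conv_top [simp]: "(rtop A)\<^sup>\<smile> = rtop A"
  by (metis BA.top_greatest BA.top_unique conv_conv conv_mono)

lemma cycle_left: "(x \<Zsemi> y) \<cdot> z = rbot A \<longleftrightarrow> (x\<^sup>\<smile> \<Zsemi> z) \<cdot> y = rbot A"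
proof -
  have "(x\<^sup>\<smile> \<Zsemi> z) \<cdot> y = rbot A" if "(x \<Zsemi> y) \<cdot> z = rbot A" for x y z
  proof -
    from that have "x\<^sup>\<smile> \<Zsemi> z \<preceq> x\<^sup>\<smile> \<Zsemi> rcompl A (x \<Zsemi> y)"
      by (simp add: comp_mono_right BA.inf_shunt BA.inf_commute)
    also have "\<dots> \<preceq> rcompl A y"
      by (rule schroeder)
    finally show ?thesis
      by (simp add: BA.inf_shunt)
  qed
  from this this[of "x\<^sup>\<smile>" z y] show ?thesis
    by auto
qed

lemma cycle_right: "(x \<Zsemi> y) \<cdot> z = rbot A \<longleftrightarrow> (z \<Zsemi> y\<^sup>\<smile>) \<cdot> x = rbot A"
proof -
  have "(x \<Zsemi> y) \<cdot> z = rbot A \<longleftrightarrow> (y\<^sup>\<smile> \<Zsemi> x\<^sup>\<smile>) \<cdot> z\<^sup>\<smile> = rbot A"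
    by (metis conv_comp conv_meet conv_eq_bot_iff)
  also have "\<dots> \<longleftrightarrow> (y \<Zsemi> z\<^sup>\<smile>) \<cdot> x\<^sup>\<smile> = rbot A"
    by (metis cycle_left conv_conv)
  also have "\<dots> \<longleftrightarrow> (z \<Zsemi> y\<^sup>\<smile>) \<cdot> x = rbot A"
    by (metis conv_comp conv_meet conv_eq_bot_iff conv_conv)
  finally show ?thesis .
qed

lemma atom_ne_bot: "ra_atom A a \<Longrightarrow> a \<noteq> rbot A"
  by (simp add: ra_atom_def)

lemma atom_le_imp_eq: "ra_atom A a \<Longrightarrow> ra_atom A b \<Longrightarrow> a \<preceq> b \<Longrightarrow> a = b"
  unfolding ra_atom_def by blast

lemma atom_le_iff_meet_ne_bot:
  assumes "ra_atom A a"
  shows "a \<preceq> x \<longleftrightarrow> x \<cdot> a \<noteq> rbot A"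
proof
  assume "a \<preceq> x"
  then show "x \<cdot> a \<noteq> rbot A"
    using atom_ne_bot[OF assms] by (simp add: BA.inf_absorb2)
next
  assume "x \<cdot> a \<noteq> rbot A"
  then have "x \<cdot> a = a"
    using assms BA.inf_le2 unfolding ra_atom_def by blast
  then show "a \<preceq> x"
    by (metis BA.inf_le1)
qed

lemma atom_conv: "ra_atom A a \<Longrightarrow> ra_atom A (a\<^sup>\<smile>)"
  unfolding ra_atom_def by (metis conv_conv conv_eq_bot_iff conv_le_conv_iff)

lemma subid_comp_le_left: "e \<preceq> rid A \<Longrightarrow> e \<Zsemi> x \<preceq> x"
  using comp_mono_left[of e "rid A" x] by simp

lemma subid_comp_le_right: "e \<preceq> rid A \<Longrightarrow> x \<Zsemi> e \<preceq> x"
  using comp_mono_right[of e "rid A" x] by simp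

lemma conv_comp_self_ne_bot: "x \<noteq> rbot A \<Longrightarrow> x\<^sup>\<smile> \<Zsemi> x \<noteq> rbot A"
  using cycle_left[of x "rid A" x] by auto

lemma subid_conv:
  assumes "e \<preceq> rid A"
  shows "e\<^sup>\<smile> = e"
proof -
  let ?w = "e\<^sup>\<smile> \<cdot> rcompl A e"
  have "?w \<preceq> rid A" "?w\<^sup>\<smile> \<preceq> rid A"
    using assms conv_mono[OF assms] by (simp_all add: BA.le_infI1 conv_meet)
  then have "?w\<^sup>\<smile> \<Zsemi> ?w \<preceq> ?w\<^sup>\<smile>" "?w\<^sup>\<smile> \<Zsemi> ?w \<preceq> ?w"
    by (blast intro: subid_comp_le_left subid_comp_le_right)+
  moreover have "?w\<^sup>\<smile> \<preceq> e"
    using conv_mono[OF BA.inf_le1[of "e\<^sup>\<smile>" "rcompl A e"]] by simp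
  ultimately have "?w\<^sup>\<smile> \<Zsemi> ?w \<preceq> e \<cdot> rcompl A e"
    by (meson BA.inf_le2 BA.le_inf_iff BA.order.trans)
  then have "?w\<^sup>\<smile> \<Zsemi> ?w = rbot A"
    by (simp add: BA.bot_unique)
  then have "?w = rbot A"
    using conv_comp_self_ne_bot by blast
  then have "e\<^sup>\<smile> \<preceq> e"
    by (simp add: BA.inf_shunt)
  then show ?thesis
    by (metis BA.order.antisym conv_le_conv_iff conv_conv)
qed

lemma subid_comp_le_meet: "e \<preceq> rid A \<Longrightarrow> f \<preceq> rid A \<Longrightarrow> e \<Zsemi> f \<preceq> e \<cdot> f"
  by (simp add: subid_comp_le_left subid_comp_le_right)

lemma subid_cylinders_disjoint:
  assumes e: "e \<preceq> rid A" and f: "f \<preceq> rid A" and "e \<cdot> f = rbot A"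
  shows "(e \<Zsemi> rtop A) \<cdot> (f \<Zsemi> rtop A) = rbot A"
proof -
  have "(e\<^sup>\<smile> \<Zsemi> f) \<cdot> rtop A = rbot A"
    using subid_comp_le_meet[OF e f] assms by (simp add: subid_conv BA.bot_unique)
  then have "(e \<Zsemi> rtop A) \<cdot> f = rbot A"
    by (simp add: cycle_left)
  moreover have "(e \<Zsemi> rtop A) \<Zsemi> rtop A = e \<Zsemi> rtop A"
    using weak_assoc[of e] e by (simp add: BA.inf_absorb1)
  ultimately show ?thesis
    using cycle_right[of "e \<Zsemi> rtop A" "rtop A" f] by (simp add: BA.inf_commute)
qed

lemma rdom_le_id: "rdom A a \<preceq> rid A"
  by (simp add: rdom_def)

lemma rdom_le_comp_conv: "rdom A a \<preceq> a \<Zsemi> a\<^sup>\<smile>"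
  by (simp add: rdom_def)

lemma rran_eq_rdom_conv: "rran A a = rdom A (a\<^sup>\<smile>)"
  by (simp add: rran_def rdom_def)

lemma atom_le_comp_of_le_comp_conv:
  assumes "ra_atom A a" and "y \<preceq> a \<Zsemi> a\<^sup>\<smile>" and "y \<noteq> rbot A"
  shows "a \<preceq> y \<Zsemi> a"
proof -
  have "(a \<Zsemi> a\<^sup>\<smile>) \<cdot> y \<noteq> rbot A"
    using assms by (simp add: BA.inf_absorb2)
  then have "(y \<Zsemi> a) \<cdot> a \<noteq> rbot A"
    using cycle_right[of a "a\<^sup>\<smile>" y] by simp
  then show ?thesis
    using assms(1) by (simp add: atom_le_iff_meet_ne_bot)
qed

lemma rdom_ne_bot: "a \<noteq> rbot A \<Longrightarrow> rdom A a \<noteq> rbot A"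
  using cycle_right[of a "a\<^sup>\<smile>" "rid A"] by (simp add: rdom_def)

lemma atom_rdom:
  assumes a: "ra_atom A a"
  shows "ra_atom A (rdom A a)"
proof -
  let ?d = "rdom A a"
  have a_le_cylinder: "a \<preceq> y \<Zsemi> rtop A" if "y \<preceq> ?d" "y \<noteq> rbot A" for y
  proof -
    have "a \<preceq> y \<Zsemi> a"
      using that rdom_le_comp_conv by (blast intro: atom_le_comp_of_le_comp_conv[OF a] BA.order.trans)
    also have "y \<Zsemi> a \<preceq> y \<Zsemi> rtop A"
      by (simp add: comp_mono_right)
    finally show ?thesis .
  qed
  have "y = rbot A \<or> y = ?d" if y: "y \<preceq> ?d" for y
  proof (rule ccontr)
    let ?f = "?d \<cdot> rcompl A y"
    assume "\<not> (y = rbot A \<or> y = ?d)"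
    then have "y \<noteq> rbot A" "?f \<noteq> rbot A"
      using y by (auto simp: BA.order.antisym)
    then have "a \<preceq> (y \<Zsemi> rtop A) \<cdot> (?f \<Zsemi> rtop A)"
      using y a_le_cylinder by simp
    also have "\<dots> = rbot A"
      using y rdom_le_id
      by (intro subid_cylinders_disjoint) (auto intro: BA.order.trans BA.le_infI1 simp: BA.inf_left_commute)
    finally show False
      using a atom_ne_bot by (simp add: BA.bot_unique)
  qed
  with a show ?thesis
    by (simp add: ra_atom_def rdom_ne_bot)
qed

lemma atom_le_rdom_comp: "ra_atom A a \<Longrightarrow> a \<preceq> rdom A a \<Zsemi> a"
  using atom_le_comp_of_le_comp_conv atom_ne_bot atom_rdom rdom_le_comp_conv by blast

lemma subid_atom_eq_rdom:
  assumes "ra_atom A a" "ra_atom A e" "e \<preceq> rid A" "e \<preceq> a \<Zsemi> a\<^sup>\<smile>"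
  shows "e = rdom A a"
  using assms atom_rdom atom_le_imp_eq by (simp add: rdom_def)

lemma atom_le_subid_comp_iff:
  assumes x: "ra_atom A x" and a: "ra_atom A a" and e: "ra_atom A e" "e \<preceq> rid A"
  shows "x \<preceq> e \<Zsemi> a \<longleftrightarrow> x = a \<and> e = rdom A a"
proof
  assume le: "x \<preceq> e \<Zsemi> a"
  then have "x \<preceq> a"
    using subid_comp_le_left[OF e(2)] BA.order.trans by blast
  then have "x = a"
    using x a atom_le_imp_eq by blast
  with le have "(e \<Zsemi> a) \<cdot> a \<noteq> rbot A"
    using a by (simp add: atom_le_iff_meet_ne_bot[symmetric])
  then have "e \<preceq> a \<Zsemi> a\<^sup>\<smile>"
    using cycle_right[of e a a] e by (simp add: atom_le_iff_meet_ne_bot)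
  with \<open>x = a\<close> show "x = a \<and> e = rdom A a"
    using a e by (simp add: subid_atom_eq_rdom)
next
  show "x = a \<and> e = rdom A a \<Longrightarrow> x \<preceq> e \<Zsemi> a"
    using a by (simp add: atom_le_rdom_comp)
qed

lemma atom_le_comp_subid_iff:
  assumes "ra_atom A x" "ra_atom A a" "ra_atom A e" "e \<preceq> rid A"
  shows "x \<preceq> a \<Zsemi> e \<longleftrightarrow> x = a \<and> e = rran A a"
proof -
  have "x \<preceq> a \<Zsemi> e \<longleftrightarrow> x\<^sup>\<smile> \<preceq> e \<Zsemi> a\<^sup>\<smile>"
    using conv_le_conv_iff[of x "a \<Zsemi> e"] assms(4) by (simp add: conv_comp subid_conv)
  also have "\<dots> \<longleftrightarrow> x = a \<and> e = rran A a"
    using assms by (simp add: atom_le_subid_comp_iff atom_conv rran_eq_rdom_conv)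
      (metis conv_conv)
  finally show ?thesis .
qed

lemma subid_le_comp_iff_rdom:
  assumes a: "ra_atom A a" and x: "ra_atom A x" and e: "ra_atom A e" "e \<preceq> rid A"
  shows "e \<preceq> a \<Zsemi> x \<longleftrightarrow> x = a\<^sup>\<smile> \<and> e = rdom A a"
proof
  assume "e \<preceq> a \<Zsemi> x"
  then have "(a \<Zsemi> x) \<cdot> e \<noteq> rbot A"
    using e by (simp add: atom_le_iff_meet_ne_bot[symmetric])
  then have "x \<preceq> a\<^sup>\<smile> \<Zsemi> e"
    using cycle_left[of a x e] x by (simp add: atom_le_iff_meet_ne_bot)
  then have "x = a\<^sup>\<smile>"
    using subid_comp_le_right[OF e(2)] x a atom_conv atom_le_imp_eq BA.order.trans by blast
  with \<open>e \<preceq> a \<Zsemi> x\<close> show "x = a\<^sup>\<smile> \<and> e = rdom A a"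
    using a e by (simp add: subid_atom_eq_rdom)
next
  show "x = a\<^sup>\<smile> \<and> e = rdom A a \<Longrightarrow> e \<preceq> a \<Zsemi> x"
    by (simp add: rdom_le_comp_conv)
qed

lemma subid_le_comp_iff_rran:
  assumes "ra_atom A a" "ra_atom A x" "ra_atom A e" "e \<preceq> rid A"
  shows "e \<preceq> x \<Zsemi> a \<longleftrightarrow> x = a\<^sup>\<smile> \<and> e = rran A a"
proof -
  have "e \<preceq> x \<Zsemi> a \<longleftrightarrow> e \<preceq> a\<^sup>\<smile> \<Zsemi> x\<^sup>\<smile>"
    using conv_le_conv_iff[of e "x \<Zsemi> a"] assms(4) by (simp add: conv_comp subid_conv)
  also have "\<dots> \<longleftrightarrow> x = a\<^sup>\<smile> \<and> e = rran A a"
    using assms by (simp add: subid_le_comp_iff_rdom atom_conv rran_eq_rdom_conv)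
      (metis conv_conv)
  finally show ?thesis .
qed

end

lemma suitE_inter_Tstar_singleton:
  assumes "k \<noteq> l" and "t \<in> suitB A"
  shows "suitE A k l \<inter> Tstar A m {t} =
    {s \<in> suitB A. sel m s = sel m t \<and> rle A (sel (3 - k - l) s) (rid A)}"
  using assms by (auto simp: suitE_def Tstar_def suitT_def)

lemma mem_suitB:
  "(x, y, z) \<in> suitB A \<longleftrightarrow> ra_atom A x \<and> ra_atom A y \<and> ra_atom A z \<and> rle A y (rcomp A z x)"
  by (simp add: suitB_def At_def)

theorem lemma6:
  fixes A :: "'a ra" and t0 t1 t2 :: 'a
  assumes "WA A" and "ra_atomic A"
    and "(t0, t1, t2) \<in> suitB A"
  shows "suitE A 1 0 \<inter> Tstar A 0 {(t0, t1, t2)} = {(t0, t0, rdom A t0)} \<and>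
         suitE A 0 1 \<inter> Tstar A 1 {(t0, t1, t2)} = {(t1, t1, rdom A t1)} \<and>
         suitE A 1 2 \<inter> Tstar A 2 {(t0, t1, t2)} = {(rran A t2, t2, t2)} \<and>
         suitE A 2 1 \<inter> Tstar A 1 {(t0, t1, t2)} = {(rran A t1, t1, t1)} \<and>
         suitE A 0 2 \<inter> Tstar A 2 {(t0, t1, t2)} = {(rconv A t2, rdom A t2, t2)} \<and>
         suitE A 2 0 \<inter> Tstar A 0 {(t0, t1, t2)} = {(t0, rran A t0, rconv A t0)}"
proof -
  interpret wa_algebra A
    by unfold_locales (fact assms(1))
  have atoms: "ra_atom A t0" "ra_atom A t1" "ra_atom A t2"
    using assms(3) by (simp_all add: mem_suitB)
  show ?thesis
    using atoms assms(3)
    by (auto simp: suitE_inter_Tstar_singleton sel_def mem_suitB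
        atom_le_subid_comp_iff atom_le_comp_subid_iff subid_le_comp_iff_rdom subid_le_comp_iff_rran
        atom_rdom atom_conv rdom_le_id rran_eq_rdom_conv)
qed

end
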